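(* Let $P$ be a convex polygon with no two edges parallel, and let $e_i\prec e_j$. Then $\mathrm{disprod}_{\ell_i,\ell_j}$ is strictly unimodal on $[v_{j+1}\circlearrowright v_i]$: $\mathrm{disprod}_{\ell_i,\ell_j}(X)$ strictly increases as $X$ travels clockwise along $\partial P$ from $v_{j+1}$ to $Z_i^j$, and strictly decreases as $X$ travels clockwise along $\partial P$ from $Z_i^j$ to $v_i$.
   Context: $P$ is a compact convex polygon with boundary $\partial P$, edges $e_1,\ldots,e_n$ in clockwise order and vertices $v_1,\ldots,v_n$, $e_i$ being the open segment from $v_i$ to $v_{i+1}$ (indices mod $n$). $\ell_i$ is the line containing $e_i$, $\mathsf{I}_{i,j}=\ell_i\cap\ell_j$. $d_l(X)$ is the distance from $X$ to the line $l$, and $\mathrm{disprod}_{l,l'}(X)=d_l(X)d_{l'}(X)$. For distinct edges, $e_i\prec e_j$ means $\mathsf{I}_{i,j}=v_i+t(v_{i+1}-v_i)$ for some $t\ge1$ (i.e. $\mathsf{I}_{i,j}$ lies between $e_i$ and $e_j$ clockwise; equivalently the clockwise turning angle from direction $v_{i+1}-v_i$ to $v_{j+1}-v_j$ is in $(0,\pi)$). For $e_i\prec e_j$, $Z_i^j$ denotes the unique point of $P$ at which $\mathrm{disprod}_{\ell_i,\ell_j}$ attains its maximum over $P$ (it lies on $\partial P$). $[X\circlearrowright X']$ is the closed portion of $\partial P$ from $X$ clockwise to $X'$. *)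

theory Defs
  imports "HOL-Analysis.Analysis"
begin

text \<open>Polygons are given by vertices v 0, ..., v (n-1) in real^2; indices taken mod n.
  Standard orientation: clockwise means the interior lies to the right of each directed edge.\<close>

definition cross2 :: "real^2 \<Rightarrow> real^2 \<Rightarrow> real" where
  "cross2 x y = x$1 * y$2 - x$2 * y$1"

definition edge_dir :: "nat \<Rightarrow> (nat \<Rightarrow> real^2) \<Rightarrow> nat \<Rightarrow> real^2" where
  "edge_dir n v i = v ((i + 1) mod n) - v (i mod n)"

text \<open>Compact convex polygon with vertices in (strict) convex position, listed clockwise:
  every other vertex lies strictly to the right of each directed edge line.\<close>
definition cw_convex_polygon :: "nat \<Rightarrow> (nat \<Rightarrow> real^2) \<Rightarrow> bool" where
  "cw_convex_polygon n v \<longleftrightarrow> n \<ge> 3 \<and>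
     (\<forall>i<n. \<forall>k<n. k \<noteq> i \<and> k \<noteq> (i + 1) mod n \<longrightarrow>
        cross2 (edge_dir n v i) (v k - v i) < 0)"

definition polygon :: "nat \<Rightarrow> (nat \<Rightarrow> real^2) \<Rightarrow> (real^2) set" where
  "polygon n v = convex hull (v ` {..<n})"

definition edge_line :: "nat \<Rightarrow> (nat \<Rightarrow> real^2) \<Rightarrow> nat \<Rightarrow> (real^2) set" where
  "edge_line n v i = {v (i mod n) + t *\<^sub>R edge_dir n v i | t. True}"

definition no_parallel_edges :: "nat \<Rightarrow> (nat \<Rightarrow> real^2) \<Rightarrow> bool" where
  "no_parallel_edges n v \<longleftrightarrow>
     (\<forall>i<n. \<forall>j<n. i \<noteq> j \<longrightarrow> cross2 (edge_dir n v i) (edge_dir n v j) \<noteq> 0)"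

definition edge_prec :: "nat \<Rightarrow> (nat \<Rightarrow> real^2) \<Rightarrow> nat \<Rightarrow> nat \<Rightarrow> bool" where
  "edge_prec n v i j \<longleftrightarrow> i mod n \<noteq> j mod n \<and>
     (\<exists>t\<ge>1. v (i mod n) + t *\<^sub>R edge_dir n v i \<in> edge_line n v j)"

definition disprod :: "nat \<Rightarrow> (nat \<Rightarrow> real^2) \<Rightarrow> nat \<Rightarrow> nat \<Rightarrow> real^2 \<Rightarrow> real" where
  "disprod n v i j X = infdist X (edge_line n v i) * infdist X (edge_line n v j)"

text \<open>Clockwise parametrisation of the boundary: parameter \<open>k + s\<close> (k natural, 0 \<le> s < 1)
  is the point \<open>v_k + s (v_{k+1} - v_k)\<close>, indices mod n; increasing parameter = clockwise.\<close>
definition bdry_path :: "nat \<Rightarrow> (nat \<Rightarrow> real^2) \<Rightarrow> real \<Rightarrow> real^2" where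
  "bdry_path n v t = (let k = nat \<lfloor>t\<rfloor>; s = t - of_int \<lfloor>t\<rfloor>
                      in v (k mod n) + s *\<^sub>R edge_dir n v k)"

end

theory Submission
  imports Defs
begin

(* Let I be the intersection point of l_i and l_j and write X(t) for the boundary point with
  parameter t.  Every edge of the arc [v_(j+1) -> v_i] has I strictly on the side of P, so seen
  from I the arc is traversed monotonically in angle; for s < t < u on the arc this makes
  X(t) - I = a (X(s) - I) + b (X(u) - I) with a, b > 0 and a + b >= 1.  As d_i d_j is a product
  of two linear forms vanishing at I and nonnegative on P, t |-> d_i d_j (X(t)) is strictly
  quasiconcave on the arc.  The maximiser Z lies on the arc: the ray from I through Z meets the
  arc at some X(z), Z - I = mu (X(z) - I) with mu <= 1 since Z is in P, and
  d_i d_j (Z) = mu^2 d_i d_j (X(z)) forces mu = 1.  A strictly quasiconcave function is strictly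
  unimodal around its maximiser. *)

lemma cross2_skew: "cross2 a b = - cross2 b a"
  by (simp add: cross2_def)

lemma cross2_self [simp]: "cross2 a a = 0"
  by (simp add: cross2_def)

lemma cross2_add_left [simp]: "cross2 (a + b) c = cross2 a c + cross2 b c"
  and cross2_add_right [simp]: "cross2 c (a + b) = cross2 c a + cross2 c b"
  and cross2_diff_left [simp]: "cross2 (a - b) c = cross2 a c - cross2 b c"
  and cross2_diff_right [simp]: "cross2 c (a - b) = cross2 c a - cross2 c b"
  and cross2_scaleR_left [simp]: "cross2 (t *\<^sub>R a) c = t * cross2 a c"
  and cross2_scaleR_right [simp]: "cross2 c (t *\<^sub>R a) = t * cross2 c a"
  and cross2_minus_left [simp]: "cross2 (- a) c = - cross2 a c"
  by (simp_all add: cross2_def algebra_simps)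

lemma cross2_zero_left [simp]: "cross2 0 c = 0"
  by (simp add: cross2_def)

lemma cross2_cramer:
  "cross2 u1 u2 * cross2 w e = cross2 w u2 * cross2 u1 e + cross2 u1 w * cross2 u2 e"
  by (simp add: cross2_def algebra_simps)

lemma cross2_turn_sign:
  assumes "cross2 a b < 0" "cross2 w d < 0" "cross2 w a > 0" "cross2 w b > 0" "cross2 a d \<le> 0"
  shows "cross2 b d < 0"
proof (rule ccontr)
  assume "\<not> cross2 b d < 0"
  then have "cross2 w b * cross2 a d \<le> 0" "cross2 a w * cross2 b d \<le> 0"
    using assms(3-5) cross2_skew[of a w] by (simp_all add: mult_nonneg_nonpos mult_nonpos_nonneg)
  moreover have "cross2 a b * cross2 w d > 0"
    using assms(1,2) by (rule mult_neg_neg)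
  ultimately show False
    using cross2_cramer[of a b w d] by linarith
qed

lemma cross2_mult_cross2:
  "cross2 a b * cross2 c d - cross2 a d * cross2 c b = cross2 a c * cross2 b d"
  by (simp add: cross2_def algebra_simps)

lemma cross2_scaleR_decomp: "cross2 a b *\<^sub>R w = cross2 w b *\<^sub>R a + cross2 a w *\<^sub>R b"
  unfolding cross2_def by (simp add: vec_eq_iff forall_2 algebra_simps)

lemma cross2_decomp:
  assumes "cross2 a b \<noteq> 0"
  shows "w = (cross2 w b / cross2 a b) *\<^sub>R a + (cross2 a w / cross2 a b) *\<^sub>R b"
proof -
  have "(1 / cross2 a b) *\<^sub>R (cross2 a b *\<^sub>R w)
      = (1 / cross2 a b) *\<^sub>R (cross2 w b *\<^sub>R a + cross2 a w *\<^sub>R b)"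
    by (rule arg_cong[OF cross2_scaleR_decomp])
  then show ?thesis
    using assms by (simp add: scaleR_add_right)
qed

lemma cross2_eq_0_imp_scaleR:
  assumes "a \<noteq> 0" "cross2 a b = 0"
  shows "\<exists>\<mu>. b = \<mu> *\<^sub>R a"
proof (cases "a$1 = 0")
  case True
  with assms have "a$2 \<noteq> 0"
    by (auto simp: vec_eq_iff forall_2)
  with True assms(2) show ?thesis
    by (intro exI[of _ "b$2 / a$2"]) (auto simp: vec_eq_iff forall_2 cross2_def)
next
  case False
  with assms(2) show ?thesis
    by (intro exI[of _ "b$1 / a$1"]) (auto simp: vec_eq_iff forall_2 cross2_def field_simps)
qed

lemma cross2_comb_sum_ge_1:
  assumes w: "w = \<alpha> *\<^sub>R a + \<beta> *\<^sub>R b" and "0 \<le> \<alpha>" "0 \<le> \<beta>" "0 < c"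
    and "cross2 w d + c = 0" "0 \<le> cross2 a d + c" "0 \<le> cross2 b d + c"
  shows "1 \<le> \<alpha> + \<beta>"
proof -
  have "(\<alpha> + \<beta> - 1) * c = \<alpha> * (cross2 a d + c) + \<beta> * (cross2 b d + c)"
    using assms(5) unfolding w by (simp add: algebra_simps)
  also have "\<dots> \<ge> 0"
    using assms(2,3,6,7) by simp
  finally show ?thesis
    using \<open>0 < c\<close> by (simp add: zero_le_mult_iff)
qed

lemma norm_mult_cross2_inner: "(norm w * norm d)\<^sup>2 = (cross2 w d)\<^sup>2 + (inner w d)\<^sup>2"
  for w d :: "real^2"
  unfolding power_mult_distrib norm_vec_def L2_set_def cross2_def inner_vec_def
  by (simp add: sum_2 power2_eq_square algebra_simps)

lemma abs_cross2_le: "\<bar>cross2 w d\<bar> \<le> norm w * norm d"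
  using norm_mult_cross2_inner[of w d] abs_le_square_iff[of "cross2 w d" "norm w * norm d"]
  by simp

lemma infdist_line:
  fixes a d X :: "real^2"
  assumes "d \<noteq> 0"
  shows "infdist X {a + t *\<^sub>R d | t. True} = \<bar>cross2 (X - a) d\<bar> / norm d"
proof -
  let ?L = "{a + t *\<^sub>R d | t. True}"
  have nd: "norm d > 0"
    using assms by simp
  have lower: "\<bar>cross2 (X - a) d\<bar> / norm d \<le> dist X (a + t *\<^sub>R d)" for t
    using abs_cross2_le[of "X - (a + t *\<^sub>R d)" d] nd by (simp add: dist_norm divide_le_eq)
  define foot where "foot = a + (inner (X - a) d / (norm d)\<^sup>2) *\<^sub>R d"
  have "inner foot d = inner X d"
    using nd unfolding foot_def by (simp add: inner_add_left inner_diff_left power2_norm_eq_inner)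
  then have "inner (X - foot) d = 0"
    by (simp add: inner_diff_left)
  then have "(dist X foot * norm d)\<^sup>2 = (cross2 (X - a) d)\<^sup>2"
    using norm_mult_cross2_inner[of "X - foot" d] unfolding foot_def dist_norm by simp
  then have foot_dist: "dist X foot = \<bar>cross2 (X - a) d\<bar> / norm d"
    using nd power2_eq_iff_nonneg[of "dist X foot * norm d" "\<bar>cross2 (X - a) d\<bar>"]
    by (simp add: field_simps)
  have "infdist X ?L = dist X foot"
    unfolding infdist_eq_setdist
  proof (rule setdist_unique)
    show "foot \<in> ?L"
      unfolding foot_def by blast
  next
    fix x y
    assume "x \<in> {X} \<and> y \<in> ?L"
    then show "dist X foot \<le> dist x y"
      using lower foot_dist by auto
  qed simp
  then show ?thesis
    using foot_dist by simp
qed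

lemma mult_cross_less_trans:
  fixes xs ys xt yt xu yu :: real
  assumes nn: "xs \<ge> 0" "ys \<ge> 0" "xt \<ge> 0" "yt \<ge> 0" "xu \<ge> 0" "yu \<ge> 0"
    and st: "xs * yt < ys * xt" and tu: "xt * yu < yt * xu"
  shows "xs * yu < ys * xu"
proof -
  have "ys * xt > 0"
    using st nn mult_nonneg_nonneg[of xs yt] by linarith
  then have "xt > 0"
    using nn by (auto simp: zero_less_mult_iff)
  have "yt * xu > 0"
    using tu nn mult_nonneg_nonneg[of xt yu] by linarith
  then have "yt > 0" "xu > 0"
    using nn by (auto simp: zero_less_mult_iff)
  have "(xs * yt) * (xt * yu) \<le> (xs * yt) * (yt * xu)"
    using tu nn by (intro mult_left_mono) auto
  also have "\<dots> < (ys * xt) * (yt * xu)"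
    using st \<open>yt > 0\<close> \<open>xu > 0\<close> by (intro mult_strict_right_mono) auto
  finally have "(xs * yu) * (xt * yt) < (ys * xu) * (xt * yt)"
    by (simp add: algebra_simps)
  then show ?thesis
    using \<open>xt > 0\<close> \<open>yt > 0\<close> by (simp add: mult_less_cancel_right)
qed

lemma comb_product_gt_min:
  fixes a b xs ys xu yu :: real
  assumes ab: "a > 0" "b > 0" "a + b \<ge> 1"
    and nn: "xs \<ge> 0" "ys \<ge> 0" "xu \<ge> 0" "yu \<ge> 0"
    and ne: "xs * yu < ys * xu"
  shows "min (xs * ys) (xu * yu) < (a * xs + b * xu) * (a * ys + b * yu)"
proof -
  define c where "c = min (xs * ys) (xu * yu)"
  define A where "A = xs * yu"
  define B where "B = ys * xu"
  have "c \<ge> 0" "A \<ge> 0" "B \<ge> 0"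
    unfolding c_def A_def B_def using nn by auto
  have "A * B = (xs * ys) * (xu * yu)"
    unfolding A_def B_def by (simp add: algebra_simps)
  then have "c * c \<le> A * B"
    using \<open>c \<ge> 0\<close> mult_mono[of c "xs * ys" c "xu * yu"] unfolding c_def by simp
  moreover have "(A + B)\<^sup>2 = (A - B)\<^sup>2 + 4 * (A * B)"
    by (simp add: power2_eq_square algebra_simps)
  moreover have "(A - B)\<^sup>2 > 0"
    using ne unfolding A_def B_def by simp
  ultimately have "(2 * c)\<^sup>2 < (A + B)\<^sup>2"
    by (simp add: power2_eq_square)
  then have AB: "2 * c < A + B"
    using \<open>A \<ge> 0\<close> \<open>B \<ge> 0\<close> power_less_imp_less_base[of "2 * c" 2 "A + B"] by simp
  have "(a + b)\<^sup>2 * c \<ge> c"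
    using \<open>c \<ge> 0\<close> one_le_power[of "a + b" 2] ab mult_right_mono[of 1 "(a + b)\<^sup>2" c] by simp
  moreover have "a * a * c \<le> a * a * (xs * ys)" "b * b * c \<le> b * b * (xu * yu)"
    unfolding c_def by (auto intro: mult_left_mono)
  moreover have "a * b * (2 * c) < a * b * (A + B)"
    using AB ab by simp
  moreover have "(a * xs + b * xu) * (a * ys + b * yu)
      = a * a * (xs * ys) + b * b * (xu * yu) + a * b * (A + B)"
    unfolding A_def B_def by (simp add: algebra_simps)
  ultimately show ?thesis
    unfolding c_def[symmetric] by (simp add: power2_eq_square algebra_simps)
qed

lemma nat_floor_bracket:
  fixes a b :: nat
  assumes "real a \<le> t" "t \<le> real b" "a < b"
  shows "\<exists>k. a \<le> k \<and> k < b \<and> real k \<le> t \<and> t \<le> real k + 1"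
proof (cases "t < real b")
  case True
  define k where "k = nat \<lfloor>t\<rfloor>"
  have "real k = of_int \<lfloor>t\<rfloor>"
    unfolding k_def using assms by simp
  moreover have "a \<le> k" "k < b"
    unfolding k_def using assms True by (simp_all add: le_nat_iff le_floor_iff nat_less_iff floor_less_iff)
  ultimately show ?thesis
    by (intro exI[of _ k]) linarith
next
  case False
  with assms show ?thesis
    by (intro exI[of _ "b - 1"]) auto
qed

lemma unit_step_chain:
  fixes R :: "real \<Rightarrow> real \<Rightarrow> bool" and a b :: nat
  assumes trans: "\<And>s t u. real a \<le> s \<Longrightarrow> s < t \<Longrightarrow> t < u \<Longrightarrow> u \<le> real b \<Longrightarrow>
      R s t \<Longrightarrow> R t u \<Longrightarrow> R s u"
    and unit: "\<And>k s u. a \<le> k \<Longrightarrow> k < b \<Longrightarrow> real k \<le> s \<Longrightarrow> s < u \<Longrightarrow> u \<le> real k + 1 \<Longrightarrow> R s u"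
    and su: "real a \<le> s" "s < u" "u \<le> real b"
  shows "R s u"
proof -
  have "R s u" if "real a \<le> s" "s < u" "u \<le> real m" "m \<le> b" for m s u
    using that
  proof (induction m arbitrary: s u)
    case 0
    then show ?case by simp
  next
    case (Suc m)
    have "a \<le> m"
      using Suc.prems by simp
    consider "u \<le> real m" | "real m \<le> s" | "s < real m" "real m < u"
      by linarith
    then show ?case
    proof cases
      case 1
      then show ?thesis using Suc by simp
    next
      case 2
      then show ?thesis using Suc.prems \<open>a \<le> m\<close> by (intro unit[of m]) auto
    next
      case 3
      then have "R s (real m)" "R (real m) u"
        using Suc \<open>a \<le> m\<close> by (auto intro: unit[of m])
      then show ?thesis
        using 3 Suc.prems trans[of s "real m" u] by simp
    qed
  qed
  then show ?thesis
    using su by blast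
qed

lemma nat_sign_change:
  fixes h :: "nat \<Rightarrow> real"
  shows "h a < 0 \<Longrightarrow> a \<le> b \<Longrightarrow> 0 \<le> h b \<Longrightarrow> \<exists>k. a \<le> k \<and> k < b \<and> h k < 0 \<and> 0 \<le> h (Suc k)"
proof (induction b)
  case 0
  then show ?case by simp
next
  case (Suc b)
  show ?case
  proof (cases "h b < 0")
    case True
    then show ?thesis
      using Suc.prems by (intro exI[of _ b]) (auto simp: le_Suc_eq)
  next
    case False
    then show ?thesis
      using Suc by (force simp: le_Suc_eq)
  qed
qed

lemma piecewise_affine_zero:
  fixes g :: "real \<Rightarrow> real" and a b :: nat
  assumes affine: "\<And>k t. a \<le> k \<Longrightarrow> k < b \<Longrightarrow> real k \<le> t \<Longrightarrow> t \<le> real k + 1 \<Longrightarrow>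
      g t = g (real k) + (t - real k) * (g (real k + 1) - g (real k))"
    and "a \<le> b" "g (real a) < 0" "0 \<le> g (real b)"
  shows "\<exists>z. real a \<le> z \<and> z \<le> real b \<and> g z = 0"
proof -
  obtain k where k: "a \<le> k" "k < b" "g (real k) < 0" "0 \<le> g (real (Suc k))"
    using nat_sign_change[of "\<lambda>m. g (real m)" a b] assms(2-4) by blast
  define g0 g1 where "g0 = g (real k)" and "g1 = g (real k + 1)"
  have "g0 < 0" "0 \<le> g1"
    using k(3,4) unfolding g0_def g1_def by (simp_all add: add.commute)
  define \<sigma> where "\<sigma> = - g0 / (g1 - g0)"
  have "0 \<le> \<sigma>" "\<sigma> \<le> 1"
    unfolding \<sigma>_def using \<open>g0 < 0\<close> \<open>0 \<le> g1\<close> by (simp_all add: divide_nonpos_pos le_divide_eq)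
  have "g (real k + \<sigma>) = g0 + \<sigma> * (g1 - g0)"
    using affine[OF k(1,2), of "real k + \<sigma>"] \<open>0 \<le> \<sigma>\<close> \<open>\<sigma> \<le> 1\<close> unfolding g0_def g1_def by simp
  also have "\<dots> = 0"
    unfolding \<sigma>_def using \<open>g0 < 0\<close> \<open>0 \<le> g1\<close> by simp
  finally show ?thesis
    using k \<open>0 \<le> \<sigma>\<close> \<open>\<sigma> \<le> 1\<close> by (intro exI[of _ "real k + \<sigma>"]) auto
qed

lemma strict_quasiconcave_unimodal:
  fixes G :: "real \<Rightarrow> real"
  assumes quasi: "\<And>s t u. a \<le> s \<Longrightarrow> s < t \<Longrightarrow> t < u \<Longrightarrow> u \<le> b \<Longrightarrow> min (G s) (G u) < G t"
    and max: "\<And>t. a \<le> t \<Longrightarrow> t \<le> b \<Longrightarrow> G t \<le> G z" and z: "a \<le> z" "z \<le> b"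
  shows "a \<le> s \<Longrightarrow> s < t \<Longrightarrow> t \<le> z \<Longrightarrow> G s < G t"
    and "z \<le> s \<Longrightarrow> s < t \<Longrightarrow> t \<le> b \<Longrightarrow> G t < G s"
proof -
  have strict: "G s < G z" if s: "a \<le> s" "s \<le> b" "s \<noteq> z" for s
  proof (rule ccontr)
    assume "\<not> G s < G z"
    then have eq: "G s = G z"
      using max[OF s(1,2)] by linarith
    define m where "m = (s + z) / 2"
    have "a \<le> m" "m \<le> b"
      unfolding m_def using s z by simp_all
    have "min (G s) (G z) < G m"
    proof (cases "s < z")
      case True
      then show ?thesis
        using quasi[of s m z] s z unfolding m_def by simp
    next
      case False
      then have "min (G z) (G s) < G m"
        using quasi[of z m s] s z unfolding m_def by simp
      then show ?thesis
        by (simp add: min.commute)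
    qed
    then show False
      using max[OF \<open>a \<le> m\<close> \<open>m \<le> b\<close>] eq by simp
  qed
  show "G s < G t" if "a \<le> s" "s < t" "t \<le> z"
  proof (cases "t = z")
    case False
    then have "min (G s) (G z) < G t"
      using quasi[of s t z] that z by linarith
    moreover have "min (G s) (G z) = G s"
      using strict[of s] that z by linarith
    ultimately show ?thesis
      by simp
  qed (use strict[of s] that z in simp)
  show "G t < G s" if "z \<le> s" "s < t" "t \<le> b"
  proof (cases "s = z")
    case False
    then have "min (G z) (G t) < G s"
      using quasi[of z s t] that z by linarith
    moreover have "min (G z) (G t) = G t"
      using strict[of t] that z by linarith
    ultimately show ?thesis
      by simp
  qed (use strict[of t] that z in simp)
qed

lemma mod_add_neq: "0 < s \<Longrightarrow> s < (n::nat) \<Longrightarrow> (m + s) mod n \<noteq> m mod n"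
  using mod_eq_dvd_iff_nat[of m "m + s" n] by (auto dest: dvd_imp_le)

locale cw_polygon =
  fixes n :: nat and v :: "nat \<Rightarrow> real^2"
  assumes cw: "cw_convex_polygon n v"
begin

definition V :: "nat \<Rightarrow> real^2" where "V m = v (m mod n)"
definition D :: "nat \<Rightarrow> real^2" where "D m = edge_dir n v m"

(* norm (D m) times the signed distance from X to the line l_m, positive on the side of P *)
definition side :: "nat \<Rightarrow> real^2 \<Rightarrow> real" where "side m X = cross2 (X - V m) (D m)"

abbreviation \<gamma> :: "real \<Rightarrow> real^2" where "\<gamma> \<equiv> bdry_path n v"

lemma n_ge_3: "n \<ge> 3"
  using cw unfolding cw_convex_polygon_def by simp

lemma V_mod: "V (m mod n) = V m"
  by (simp add: V_def)

lemma V_add_n [simp]: "V (m + n) = V m"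
  by (simp add: V_def)

lemma D_eq: "D m = V (Suc m) - V m"
  by (simp add: D_def V_def edge_dir_def)

lemma D_add_n [simp]: "D (m + n) = D m"
  unfolding D_eq using V_add_n[of "Suc m"] by simp

lemma edge_line_eq: "edge_line n v m = {V m + t *\<^sub>R D m | t. True}"
  by (simp add: edge_line_def V_def D_def)

lemma side_shift: "side m X = cross2 (X - Y) (D m) + side m Y"
  by (simp add: side_def)

lemma side_affine: "side m (X + t *\<^sub>R Y) = side m X + t * cross2 Y (D m)"
  by (simp add: side_def algebra_simps)

lemma side_comb:
  assumes "u + w = 1"
  shows "side m (u *\<^sub>R X + w *\<^sub>R Y) = u * side m X + w * side m Y"
proof -
  have w: "w = 1 - u"
    using assms by simp
  show ?thesis
    unfolding w side_def by (simp add: algebra_simps)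
qed

lemma side_start [simp]: "side m (V m) = 0"
  and side_end [simp]: "side m (V (Suc m)) = 0"
  by (simp_all add: side_def D_eq)

lemma side_vertex_pos:
  assumes "r mod n \<noteq> m mod n" "r mod n \<noteq> Suc m mod n"
  shows "side m (V r) > 0"
proof -
  have "cross2 (edge_dir n v (m mod n)) (v (r mod n) - v (m mod n)) < 0"
    using cw assms n_ge_3 unfolding cw_convex_polygon_def
    by (metis mod_Suc_eq mod_less_divisor Suc_eq_plus1 gr0I not_numeral_le_zero)
  then show ?thesis
    unfolding side_def using cross2_skew[of "V r - V m" "D m"]
    by (simp add: V_def D_def edge_dir_def mod_Suc_eq)
qed

lemma side_vertex_nonneg: "side m (V r) \<ge> 0"
proof (cases "r mod n = m mod n \<or> r mod n = Suc m mod n")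
  case True
  then show ?thesis
    by (metis V_mod order.refl side_end side_start)
qed (use side_vertex_pos[of r m] in auto)

lemma side_vertex_pos_offset: "2 \<le> s \<Longrightarrow> s < n \<Longrightarrow> side m (V (m + s)) > 0"
  using mod_add_neq[of s n m] mod_add_neq[of "s - 1" n "Suc m"] by (intro side_vertex_pos) auto

lemma cross2_D_vertex_offset: "2 \<le> s \<Longrightarrow> s < n \<Longrightarrow> cross2 (D m) (V (m + s) - V m) < 0"
  using side_vertex_pos_offset[of s m] cross2_skew[of "D m" "V (m + s) - V m"]
  by (simp add: side_def)

lemma edges_turn_right: "cross2 (D m) (D (Suc m)) < 0"
proof -
  have "V (m + 2) - V m = D m + D (Suc m)"
    by (simp add: D_eq)
  then show ?thesis
    using cross2_D_vertex_offset[of 2 m] n_ge_3 by simp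
qed

lemma D_nonzero: "D m \<noteq> 0"
  using edges_turn_right[of m] by auto

lemma side_step: "side m (V (Suc r)) - side m (V r) = cross2 (D r) (D m)"
  by (simp add: side_def D_eq)

lemma edge_turn_step:
  assumes s: "1 \<le> s" "s + 2 \<le> n" and le: "cross2 (D (m + s)) (D m) \<le> 0"
  shows "cross2 (D (Suc (m + s))) (D m) < 0"
proof -
  define r where "r = Suc (m + s)"
  have side_r: "side m (V r) > 0"
    unfolding r_def using side_vertex_pos_offset[of "Suc s" m] s by simp
  show ?thesis
  proof (cases "s + 2 = n")
    case True
    then have "Suc r = m + n"
      unfolding r_def by simp
    then have "V (Suc r) = V m"
      by simp
    then show ?thesis
      using side_step[of m r] side_r unfolding r_def by simp
  next
    case False
    define w where "w = V m - V r"
    have "V m = V (m + s + (n - s))"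
      using s by (simp add: add.assoc)
    then have "cross2 (D (m + s)) (V m - V (m + s)) < 0"
      using cross2_D_vertex_offset[of "n - s" "m + s"] s by simp
    moreover have "V m - V (m + s) = w + D (m + s)"
      unfolding w_def r_def by (simp add: D_eq)
    ultimately have wA: "cross2 w (D (m + s)) > 0"
      using cross2_skew[of "D (m + s)" w] by simp
    have "V m = V (r + (n - Suc s))"
      unfolding r_def using s by (simp add: add.assoc)
    then have wB: "cross2 w (D r) > 0"
      unfolding w_def using cross2_D_vertex_offset[of "n - Suc s" r] s False
        cross2_skew[of "V m - V r"]
      by simp
    have "cross2 (D (m + s)) (D r) < 0"
      unfolding r_def using edges_turn_right by simp
    moreover have "cross2 w (D m) < 0"
      unfolding w_def using side_r by (simp add: side_def)
    ultimately show ?thesis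
      using cross2_turn_sign[of "D (m + s)" "D r" w "D m"] wA wB le unfolding r_def by simp
  qed
qed

lemma edge_turn_mono:
  assumes "1 \<le> s" "s < t" "t < n" "cross2 (D (m + s)) (D m) \<le> 0"
  shows "cross2 (D (m + t)) (D m) < 0"
  using assms
proof (induction t)
  case (Suc t)
  then show ?case
    using edge_turn_step[of s m] edge_turn_step[of t m] by (cases "s = t") auto
qed simp

lemma V_in_polygon: "V k \<in> polygon n v"
  unfolding polygon_def V_def using n_ge_3 by (intro hull_inc) auto

lemma side_nonneg: "X \<in> polygon n v \<Longrightarrow> side m X \<ge> 0"
proof -
  have "polygon n v \<subseteq> {X. side m X \<ge> 0}"
    unfolding polygon_def
  proof (rule hull_minimal)
    have "0 \<le> side m (v r)" if "r < n" for r
      using side_vertex_nonneg[of m r] that by (simp add: V_def)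
    then show "v ` {..<n} \<subseteq> {X. 0 \<le> side m X}"
      by auto
    show "convex {X. 0 \<le> side m X}"
      unfolding convex_def using side_comb by (simp add: add_nonneg_nonneg)
  qed
  then show "X \<in> polygon n v \<Longrightarrow> side m X \<ge> 0"
    by auto
qed

lemma infdist_edge_line: "infdist X (edge_line n v m) = \<bar>side m X\<bar> / norm (D m)"
  unfolding edge_line_eq side_def by (rule infdist_line[OF D_nonzero])

lemma disprod_eq:
  "X \<in> polygon n v \<Longrightarrow> disprod n v i j X = side i X * side j X / (norm (D i) * norm (D j))"
  using side_nonneg[of X i] side_nonneg[of X j] by (simp add: disprod_def infdist_edge_line)

lemma bdry_path_edge:
  assumes "real k \<le> t" "t \<le> real k + 1"
  shows "\<gamma> t = V k + (t - real k) *\<^sub>R D k"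
proof (cases "t < real k + 1")
  case True
  then have "\<lfloor>t\<rfloor> = int k"
    using assms by (simp add: floor_eq_iff)
  then show ?thesis
    unfolding bdry_path_def Let_def by (simp add: V_def D_def)
next
  case False
  then have t: "t = real k + 1"
    using assms by simp
  moreover have "nat (int k + 1) = Suc k"
    by simp
  ultimately show ?thesis
    unfolding bdry_path_def Let_def using V_def[of "Suc k"] by (simp add: D_eq)
qed

lemma bdry_path_in_polygon:
  assumes "0 \<le> t"
  shows "\<gamma> t \<in> polygon n v"
proof -
  define k where "k = nat \<lfloor>t\<rfloor>"
  have "real k = of_int \<lfloor>t\<rfloor>"
    unfolding k_def using assms by simp
  then have k: "real k \<le> t" "t \<le> real k + 1"
    by linarith+
  define s where "s = t - real k"
  have "\<gamma> t = (1 - s) *\<^sub>R V k + s *\<^sub>R V (Suc k)"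
    using bdry_path_edge[OF k] unfolding s_def by (simp add: D_eq algebra_simps)
  also have "\<dots> \<in> polygon n v"
    using k V_in_polygon unfolding s_def polygon_def
    by (intro convexD) (auto simp: convex_convex_hull)
  finally show ?thesis .
qed

lemma side_bdry_path_edge: "real k \<le> t \<Longrightarrow> t \<le> real k + 1 \<Longrightarrow> side k (\<gamma> t) = 0"
  using bdry_path_edge side_affine[of k "V k" "t - real k" "D k"] by simp

end

(* V i + T *R D i = V j + T' *R D j is the intersection point I of l_i and l_j;
  T >= 1 is the relation e_i \<prec> e_j. *)
locale edge_pair = cw_polygon +
  fixes i j :: nat and T T' :: real
  assumes i_lt: "i < n" and j_lt: "j < n"
    and not_parallel: "cross2 (D i) (D j) \<noteq> 0"
    and T_ge_1: "1 \<le> T"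
    and lines_meet: "V i + T *\<^sub>R D i = V j + T' *\<^sub>R D j"
begin

definition I :: "real^2" where "I = V i + T *\<^sub>R D i"

(* the arc [v_(j+1) -> v_i] is the parameter range [Suc j, arc_end] of \<gamma> *)
definition arc_end :: nat where "arc_end = (if Suc j \<le> i then i else i + n)"

definition side_prod :: "real^2 \<Rightarrow> real" where "side_prod X = side i X * side j X"

lemma side_i_I: "side i I = 0"
  unfolding I_def side_affine by simp

lemma side_j_I: "side j I = 0"
  unfolding I_def lines_meet side_affine by simp

lemma side_i_eq: "side i X = cross2 (X - I) (D i)"
  using side_shift[of i X I] side_i_I by simp

lemma side_j_eq: "side j X = cross2 (X - I) (D j)"
  using side_shift[of j X I] side_j_I by simp

lemma cross2_Dj_Di_pos: "cross2 (D j) (D i) > 0"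
  and side_j_V_i_pos: "side j (V i) > 0"
proof -
  have e: "side j I = side j (V i) + T * cross2 (D i) (D j)"
    unfolding I_def by (rule side_affine)
  have "cross2 (D i) (D j) < 0"
  proof (rule ccontr)
    assume "\<not> ?thesis"
    then have "T * cross2 (D i) (D j) > 0"
      using not_parallel T_ge_1 by simp
    then show False
      using e side_j_I side_vertex_nonneg[of j i] by simp
  qed
  then show "cross2 (D j) (D i) > 0"
    using cross2_skew[of "D j" "D i"] by simp
  have "T * cross2 (D i) (D j) < 0"
    using \<open>cross2 (D i) (D j) < 0\<close> T_ge_1 by (simp add: mult_pos_neg)
  then show "side j (V i) > 0"
    using e side_j_I by simp
qed

lemma i_ne_j: "i \<noteq> j"
  using not_parallel by auto

lemma Suc_j_mod_ne: "Suc j mod n \<noteq> i mod n" "Suc j mod n \<noteq> Suc i mod n"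
proof -
  show "Suc j mod n \<noteq> i mod n"
    using side_j_V_i_pos V_mod[of i] V_mod[of "Suc j"] by (metis less_irrefl side_end)
  show "Suc j mod n \<noteq> Suc i mod n"
    using i_ne_j i_lt j_lt by (simp add: mod_Suc)
qed

lemma side_i_V_Suc_j_pos: "side i (V (Suc j)) > 0"
  using Suc_j_mod_ne by (intro side_vertex_pos) auto

lemma T'_nonpos: "T' \<le> 0"
proof -
  have "I = V j + T' *\<^sub>R D j"
    unfolding I_def lines_meet ..
  then have "side i I = side i (V j) + T' * cross2 (D j) (D i)"
    using side_affine by simp
  then have "T' * cross2 (D j) (D i) \<le> 0"
    using side_i_I side_vertex_nonneg[of i j] by simp
  then show ?thesis
    using cross2_Dj_Di_pos by (simp add: mult_le_0_iff)
qed

lemma arc_end_facts: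
  "Suc j < arc_end" "arc_end < j + n" "V arc_end = V i" "D arc_end = D i"
  "V (Suc arc_end) = V (Suc i)"
proof -
  show "Suc j < arc_end" "arc_end < j + n"
    using Suc_j_mod_ne(1) i_ne_j i_lt j_lt unfolding arc_end_def
    by (cases "Suc j \<le> i"; cases "Suc j = n"; auto)+
  show "V arc_end = V i" "D arc_end = D i" "V (Suc arc_end) = V (Suc i)"
    unfolding arc_end_def using V_add_n[of "Suc i"] by auto
qed

lemma side_arc_edge_I_pos:
  assumes k: "Suc j \<le> k" "k < arc_end"
  shows "side k I > 0"
proof (cases "cross2 (D i) (D k) \<ge> 0")
  case True
  have "V (Suc i) = V (k + (Suc arc_end - k))" "2 \<le> Suc arc_end - k" "Suc arc_end - k < n"
    using k arc_end_facts by auto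
  then have "side k (V (Suc i)) > 0"
    using side_vertex_pos_offset[of "Suc arc_end - k" k] by simp
  moreover have "side k I = side k (V (Suc i)) + (T - 1) * cross2 (D i) (D k)"
    using side_affine[of k "V i" T "D i"] side_step[of k i] unfolding I_def
    by (simp add: algebra_simps)
  moreover have "(T - 1) * cross2 (D i) (D k) \<ge> 0"
    using True T_ge_1 by simp
  ultimately show ?thesis
    by linarith
next
  case False
  have "cross2 (D (k + (arc_end - k))) (D k) \<le> 0"
    using False k arc_end_facts cross2_skew[of "D i" "D k"] by simp
  then have "cross2 (D (k + (j + n - k))) (D k) < 0"
    using k arc_end_facts by (intro edge_turn_mono[of "arc_end - k"]) auto
  then have Dj_Dk: "cross2 (D j) (D k) < 0"
    using k arc_end_facts by simp
  have "V j = V (k + (j + n - k))" "2 \<le> j + n - k" "j + n - k < n"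
    using k arc_end_facts by auto
  then have "side k (V j) > 0"
    using side_vertex_pos_offset[of "j + n - k" k] by simp
  moreover have "side k I = side k (V j) + T' * cross2 (D j) (D k)"
    unfolding I_def lines_meet side_affine ..
  moreover have "T' * cross2 (D j) (D k) \<ge> 0"
    using Dj_Dk T'_nonpos by (simp add: mult_nonpos_nonpos)
  ultimately show ?thesis
    by linarith
qed

lemma side_prod_scaleR: "side_prod (I + \<mu> *\<^sub>R (X - I)) = \<mu>\<^sup>2 * side_prod X"
  unfolding side_prod_def side_i_eq[of "I + _"] side_j_eq[of "I + _"] side_i_eq[of X] side_j_eq[of X]
  by (simp add: power2_eq_square)

lemma arc_order_iff:
  "cross2 (X - I) (Y - I) < 0 \<longleftrightarrow> side j X * side i Y < side i X * side j Y"
proof -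
  have "side j X * side i Y - side i X * side j Y = cross2 (X - I) (Y - I) * cross2 (D j) (D i)"
    unfolding side_i_eq side_j_eq by (rule cross2_mult_cross2)
  moreover have "cross2 (X - I) (Y - I) * cross2 (D j) (D i) < 0 \<longleftrightarrow> cross2 (X - I) (Y - I) < 0"
    using cross2_Dj_Di_pos by (simp add: mult_less_0_iff)
  ultimately show ?thesis
    by linarith
qed

lemma arc_turns_on_edge:
  assumes k: "Suc j \<le> k" "k < arc_end" and su: "real k \<le> s" "s < u" "u \<le> real k + 1"
  shows "cross2 (\<gamma> s - I) (\<gamma> u - I) < 0"
proof -
  have pu: "\<gamma> u = V k + (u - real k) *\<^sub>R D k" and ps: "\<gamma> s = V k + (s - real k) *\<^sub>R D k"
    using bdry_path_edge su by auto
  have "\<gamma> u - I = (\<gamma> s - I) + (u - s) *\<^sub>R D k"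
    unfolding pu ps by (simp add: algebra_simps)
  then have "cross2 (\<gamma> s - I) (\<gamma> u - I) = (u - s) * cross2 (\<gamma> s - I) (D k)"
    by (simp only: cross2_add_right cross2_scaleR_right cross2_self add_0_left)
  also have "cross2 (\<gamma> s - I) (D k) = - side k I"
    using side_shift[of k "\<gamma> s" I] side_bdry_path_edge[of k s] su by simp
  finally show ?thesis
    using side_arc_edge_I_pos[OF k] su by (simp add: mult_pos_neg)
qed

lemma arc_turns:
  assumes "real (Suc j) \<le> s" "s < u" "u \<le> real arc_end"
  shows "cross2 (\<gamma> s - I) (\<gamma> u - I) < 0"
proof (rule unit_step_chain[where R = "\<lambda>s u. cross2 (\<gamma> s - I) (\<gamma> u - I) < 0"])
  fix s t u
  assume "real (Suc j) \<le> s" "s < t" "t < u" "u \<le> real arc_end"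
  then have "0 \<le> side m (\<gamma> s)" "0 \<le> side m (\<gamma> t)" "0 \<le> side m (\<gamma> u)" for m
    using side_nonneg bdry_path_in_polygon by auto
  then show "cross2 (\<gamma> s - I) (\<gamma> t - I) < 0 \<Longrightarrow> cross2 (\<gamma> t - I) (\<gamma> u - I) < 0 \<Longrightarrow>
      cross2 (\<gamma> s - I) (\<gamma> u - I) < 0"
    unfolding arc_order_iff
    using mult_cross_less_trans[of "side j (\<gamma> s)" "side i (\<gamma> s)" "side j (\<gamma> t)" "side i (\<gamma> t)"
        "side j (\<gamma> u)" "side i (\<gamma> u)"]
    by blast
qed (use assms arc_turns_on_edge in auto)

lemma arc_quasiconcave:
  assumes st: "real (Suc j) \<le> s" "s < t" "t < u" "u \<le> real arc_end"
  shows "min (side_prod (\<gamma> s)) (side_prod (\<gamma> u)) < side_prod (\<gamma> t)"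
proof -
  define ws wt wu where "ws = \<gamma> s - I" and "wt = \<gamma> t - I" and "wu = \<gamma> u - I"
  have su: "cross2 ws wu < 0" and tu: "cross2 wt wu < 0" and "cross2 ws wt < 0"
    unfolding ws_def wt_def wu_def using arc_turns st by auto
  define \<alpha> \<beta> where "\<alpha> = cross2 wt wu / cross2 ws wu" and "\<beta> = cross2 ws wt / cross2 ws wu"
  have "\<alpha> > 0" "\<beta> > 0"
    unfolding \<alpha>_def \<beta>_def using su tu \<open>cross2 ws wt < 0\<close> by (simp_all add: divide_neg_neg)
  have wt: "wt = \<alpha> *\<^sub>R ws + \<beta> *\<^sub>R wu"
    unfolding \<alpha>_def \<beta>_def using cross2_decomp su by simp
  obtain k where k: "Suc j \<le> k" "k < arc_end" "real k \<le> t" "t \<le> real k + 1"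
    using nat_floor_bracket[of "Suc j" t arc_end] st arc_end_facts by auto
  have "side k (\<gamma> r) = cross2 (\<gamma> r - I) (D k) + side k I" for r
    by (rule side_shift)
  then have "1 \<le> \<alpha> + \<beta>"
    using side_bdry_path_edge[OF k(3,4)] side_arc_edge_I_pos[OF k(1,2)]
      side_nonneg[OF bdry_path_in_polygon, of s k] side_nonneg[OF bdry_path_in_polygon, of u k] st
      \<open>\<alpha> > 0\<close> \<open>\<beta> > 0\<close>
    by (intro cross2_comb_sum_ge_1[OF wt, where c = "side k I" and d = "D k"]) (auto simp: ws_def wt_def wu_def)
  moreover have "side m (\<gamma> t) = \<alpha> * side m (\<gamma> s) + \<beta> * side m (\<gamma> u)" if "m = i \<or> m = j" for m
    using that arg_cong[OF wt, of "\<lambda>w. cross2 w (D m)"]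
    unfolding ws_def wt_def wu_def by (auto simp: side_i_eq side_j_eq)
  moreover have "0 \<le> side m (\<gamma> s)" "0 \<le> side m (\<gamma> u)" for m
    using side_nonneg bdry_path_in_polygon st by auto
  moreover have "side j (\<gamma> s) * side i (\<gamma> u) < side i (\<gamma> s) * side j (\<gamma> u)"
    using su unfolding ws_def wu_def arc_order_iff .
  ultimately have "min (side j (\<gamma> s) * side i (\<gamma> s)) (side j (\<gamma> u) * side i (\<gamma> u))
      < side j (\<gamma> t) * side i (\<gamma> t)"
    using comb_product_gt_min[OF \<open>\<alpha> > 0\<close> \<open>\<beta> > 0\<close>, of "side j (\<gamma> s)" "side i (\<gamma> s)"
        "side j (\<gamma> u)" "side i (\<gamma> u)"]
    by simp
  then show ?thesis
    unfolding side_prod_def by (simp add: mult.commute)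
qed

lemma bdry_path_arc_ends: "\<gamma> (real (Suc j)) = V (Suc j)" "\<gamma> (real arc_end) = V i"
proof -
  show "\<gamma> (real (Suc j)) = V (Suc j)"
    using bdry_path_edge[of "Suc j" "real (Suc j)"] by simp
  have "\<gamma> (real arc_end) = V (arc_end - 1) + D (arc_end - 1)"
    using bdry_path_edge[of "arc_end - 1" "real arc_end"] arc_end_facts by (simp add: of_nat_diff)
  also have "\<dots> = V arc_end"
    using D_eq[of "arc_end - 1"] arc_end_facts by simp
  finally show "\<gamma> (real arc_end) = V i"
    using arc_end_facts by simp
qed

lemma side_prod_pos_in_polygon: "\<exists>M\<in>polygon n v. side_prod M > 0"
proof
  define M where "M = (1/2) *\<^sub>R V (Suc j) + (1/2) *\<^sub>R V i"
  show "M \<in> polygon n v"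
    unfolding M_def polygon_def using V_in_polygon
    by (intro convexD) (auto simp: convex_convex_hull polygon_def)
  show "side_prod M > 0"
    unfolding M_def side_prod_def using side_comb side_i_V_Suc_j_pos side_j_V_i_pos by simp
qed

lemma arc_meets_ray:
  assumes "side i Z > 0" "side j Z > 0"
  shows "\<exists>z. real (Suc j) \<le> z \<and> z \<le> real arc_end \<and> cross2 (\<gamma> z - I) (Z - I) = 0"
proof (rule piecewise_affine_zero)
  fix k t
  assume "real k \<le> t" "t \<le> real k + 1"
  then have "\<gamma> t = V k + (t - real k) *\<^sub>R D k" "\<gamma> (real k) = V k" "\<gamma> (real k + 1) = V k + D k"
    using bdry_path_edge[of k] by auto
  then show "cross2 (\<gamma> t - I) (Z - I) = cross2 (\<gamma> (real k) - I) (Z - I)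
      + (t - real k) * (cross2 (\<gamma> (real k + 1) - I) (Z - I) - cross2 (\<gamma> (real k) - I) (Z - I))"
    by (simp only:) (simp add: algebra_simps)
next
  show "cross2 (\<gamma> (real (Suc j)) - I) (Z - I) < 0"
    unfolding bdry_path_arc_ends arc_order_iff using side_i_V_Suc_j_pos assms by simp
  have "\<not> cross2 (V i - I) (Z - I) < 0"
    unfolding arc_order_iff using mult_pos_pos[OF side_j_V_i_pos assms(1)] by simp
  then show "0 \<le> cross2 (\<gamma> (real arc_end) - I) (Z - I)"
    unfolding bdry_path_arc_ends by simp
qed (use arc_end_facts in simp)

lemma arc_point_on_ray_eq:
  assumes Z: "Z \<in> polygon n v" and max: "\<And>Y. Y \<in> polygon n v \<Longrightarrow> side_prod Y \<le> side_prod Z"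
    and pos: "side_prod Z > 0"
    and z: "real (Suc j) \<le> z" "z \<le> real arc_end" "cross2 (\<gamma> z - I) (Z - I) = 0"
  shows "\<gamma> z = Z"
proof -
  obtain k where k: "Suc j \<le> k" "k < arc_end" "real k \<le> z" "z \<le> real k + 1"
    using nat_floor_bracket[of "Suc j" z arc_end] z arc_end_facts by auto
  have side_k: "side k (\<gamma> z) = 0" "side k I > 0"
    using side_bdry_path_edge[OF k(3,4)] side_arc_edge_I_pos[OF k(1,2)] by auto
  then have "\<gamma> z - I \<noteq> 0"
    by auto
  then obtain \<mu> where \<mu>: "Z - I = \<mu> *\<^sub>R (\<gamma> z - I)"
    using cross2_eq_0_imp_scaleR z(3) by blast
  have "side k Z = (1 - \<mu>) * side k I"
    using side_shift[of k Z I] side_shift[of k "\<gamma> z" I] side_k unfolding \<mu> by (simp add: algebra_simps)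
  then have "\<mu> \<le> 1"
    using side_nonneg[OF Z, of k] side_k by (simp add: zero_le_mult_iff)
  have "side j Z = \<mu> * side j (\<gamma> z)"
    using \<mu> side_j_eq[of Z] side_j_eq[of "\<gamma> z"] by simp
  moreover have "side j Z > 0"
    using pos side_nonneg[OF Z, of i] side_nonneg[OF Z, of j] unfolding side_prod_def
    by (auto simp: zero_less_mult_iff)
  ultimately have "\<mu> > 0"
    using side_nonneg[OF bdry_path_in_polygon, of z j] z by (auto simp: zero_less_mult_iff)
  have "Z = I + \<mu> *\<^sub>R (\<gamma> z - I)"
    using \<mu> by (simp add: algebra_simps)
  then have "side_prod Z = \<mu>\<^sup>2 * side_prod (\<gamma> z)"
    using side_prod_scaleR by simp
  moreover have "side_prod (\<gamma> z) \<le> side_prod Z"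
    using max bdry_path_in_polygon z by simp
  moreover have "side_prod (\<gamma> z) > 0"
    using pos calculation by (simp add: zero_less_mult_iff)
  ultimately have "1\<^sup>2 \<le> \<mu>\<^sup>2"
    by simp
  then have "\<mu> = 1"
    using \<open>\<mu> \<le> 1\<close> \<open>\<mu> > 0\<close> power2_le_imp_le[of 1 \<mu>] by simp
  then show ?thesis
    using \<mu> by simp
qed

lemma maximizer_on_arc:
  assumes Z: "Z \<in> polygon n v" and max: "\<And>Y. Y \<in> polygon n v \<Longrightarrow> side_prod Y \<le> side_prod Z"
  shows "\<exists>z. real (Suc j) \<le> z \<and> z \<le> real arc_end \<and> \<gamma> z = Z"
proof -
  have "side_prod Z > 0"
    using side_prod_pos_in_polygon max by force
  moreover have "side i Z > 0" "side j Z > 0"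
    using calculation side_nonneg[OF Z, of i] side_nonneg[OF Z, of j] unfolding side_prod_def
    by (auto simp: zero_less_mult_iff)
  ultimately show ?thesis
    using arc_meets_ray arc_point_on_ray_eq[OF Z max] by blast
qed

lemma disprod_bdry_path: "0 \<le> r \<Longrightarrow>
    disprod n v i j (\<gamma> r) = side_prod (\<gamma> r) / (norm (D i) * norm (D j))"
  using disprod_eq bdry_path_in_polygon unfolding side_prod_def by simp

lemma disprod_arc_quasiconcave:
  assumes "real (Suc j) \<le> s" "s < t" "t < u" "u \<le> real arc_end"
  shows "min (disprod n v i j (\<gamma> s)) (disprod n v i j (\<gamma> u)) < disprod n v i j (\<gamma> t)"
proof -
  have "norm (D i) * norm (D j) > 0"
    using D_nonzero by simp
  then have "min (side_prod (\<gamma> s)) (side_prod (\<gamma> u)) / (norm (D i) * norm (D j))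
      < side_prod (\<gamma> t) / (norm (D i) * norm (D j))"
    using arc_quasiconcave[OF assms] by (simp add: divide_strict_right_mono)
  then show ?thesis
    using assms disprod_bdry_path[of s] disprod_bdry_path[of t] disprod_bdry_path[of u]
      \<open>norm (D i) * norm (D j) > 0\<close>
    by (simp add: min_divide_distrib_right)
qed

lemma disprod_max_imp_side_prod_max:
  assumes "X \<in> polygon n v" "Y \<in> polygon n v" "disprod n v i j X \<le> disprod n v i j Y"
  shows "side_prod X \<le> side_prod Y"
proof -
  have "norm (D i) * norm (D j) > 0"
    using D_nonzero by simp
  then show ?thesis
    using assms disprod_eq[of X i j] disprod_eq[of Y i j] unfolding side_prod_def
    by (simp add: divide_le_cancel)
qed

theorem disprod_arc_unimodal:
  assumes Z: "Z \<in> polygon n v" and max: "\<forall>Y\<in>polygon n v. disprod n v i j Y \<le> disprod n v i j Z"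
  shows "\<exists>z\<in>{real (Suc j)..real arc_end}. \<gamma> z = Z \<and>
      (\<forall>s t. real (Suc j) \<le> s \<and> s < t \<and> t \<le> z \<longrightarrow>
          disprod n v i j (\<gamma> s) < disprod n v i j (\<gamma> t)) \<and>
      (\<forall>s t. z \<le> s \<and> s < t \<and> t \<le> real arc_end \<longrightarrow>
          disprod n v i j (\<gamma> t) < disprod n v i j (\<gamma> s))"
proof -
  let ?f = "\<lambda>s. disprod n v i j (\<gamma> s)"
  obtain z where z: "real (Suc j) \<le> z" "z \<le> real arc_end" "\<gamma> z = Z"
    using maximizer_on_arc[OF Z] disprod_max_imp_side_prod_max Z max by blast
  have "?f s \<le> ?f z" if "real (Suc j) \<le> s" "s \<le> real arc_end" for s
    using max bdry_path_in_polygon that z by simp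
  note unimodal = strict_quasiconcave_unimodal[of "real (Suc j)" "real arc_end" ?f,
      OF disprod_arc_quasiconcave this z(1,2)]
  show ?thesis
  proof (intro bexI[of _ z] conjI allI impI)
    show "z \<in> {real (Suc j)..real arc_end}"
      using z by simp
    fix s t
    show "real (Suc j) \<le> s \<and> s < t \<and> t \<le> z \<Longrightarrow> ?f s < ?f t"
      using unimodal(1) by blast
    show "z \<le> s \<and> s < t \<and> t \<le> real arc_end \<Longrightarrow> ?f t < ?f s"
      using unimodal(2) by blast
  qed (rule z(3))
qed

end

lemma edge_prec_imp_edge_pair:
  assumes "cw_convex_polygon n v" "no_parallel_edges n v" "i < n" "j < n" "edge_prec n v i j"
  shows "\<exists>T T'. edge_pair n v i j T T'"
proof -
  interpret cw_polygon n v
    using assms(1) by unfold_locales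
  obtain T where T: "1 \<le> T" "V i + T *\<^sub>R D i \<in> edge_line n v j" and "i mod n \<noteq> j mod n"
    using assms(5) unfolding edge_prec_def V_def D_def by blast
  then obtain T' where "V i + T *\<^sub>R D i = V j + T' *\<^sub>R D j"
    unfolding edge_line_eq by blast
  moreover have "cross2 (D i) (D j) \<noteq> 0"
    using assms(2-4) \<open>i mod n \<noteq> j mod n\<close> unfolding no_parallel_edges_def D_def by simp
  ultimately have "edge_pair n v i j T T'"
    using assms(3,4) T(1) by unfold_locales
  then show ?thesis
    by blast
qed

theorem lemma5:
  fixes n :: nat and v :: "nat \<Rightarrow> real^2" and i j :: nat and Z :: "real^2"
  assumes "cw_convex_polygon n v"
    and "no_parallel_edges n v"
    and "i < n" and "j < n"
    and "edge_prec n v i j"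
    and "Z \<in> polygon n v"
    and "\<forall>Y\<in>polygon n v. disprod n v i j Y \<le> disprod n v i j Z"
  shows "let a = real (j + 1); b = (if j + 1 \<le> i then real i else real (i + n)) in
    \<exists>z\<in>{a..b}. bdry_path n v z = Z \<and>
      (\<forall>s t. a \<le> s \<and> s < t \<and> t \<le> z \<longrightarrow>
          disprod n v i j (bdry_path n v s) < disprod n v i j (bdry_path n v t)) \<and>
      (\<forall>s t. z \<le> s \<and> s < t \<and> t \<le> b \<longrightarrow>
          disprod n v i j (bdry_path n v t) < disprod n v i j (bdry_path n v s))"
proof -
  obtain T T' where "edge_pair n v i j T T'"
    using edge_prec_imp_edge_pair assms(1-5) by blast
  then interpret edge_pair n v i j T T' .
  have "(if j + 1 \<le> i then real i else real (i + n)) = real arc_end"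
    unfolding arc_end_def by simp
  then show ?thesis
    unfolding Let_def using disprod_arc_unimodal[OF assms(6,7)] by (simp only: Suc_eq_plus1)
qed

end
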